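(* Let $W \in \mathbb{R}^{m \times D}$, let $k$ be a nonnegative integer with $k < D$ and $k < m$, and let $\mathbf{1} \in \mathbb{R}^D$ be the all-ones vector. Consider the function $$f(w_c, W_s, \Gamma) = \left\| W - w_c \mathbf{1}^{\top} - W_s \Gamma^{\top} \right\|_F^2$$ over all $w_c \in \mathbb{R}^m$, $W_s \in \mathbb{R}^{m \times k}$, $\Gamma \in \mathbb{R}^{D \times k}$ subject to the constraint $w_c \perp \mathrm{Span}(W_s)$ (the column span of $W_s$). Define: (1) $w_c := \frac{1}{D} W \mathbf{1}$; (2) $W_s := U_k \Sigma_k$ and $\Gamma := V_k$, where $U_k \Sigma_k V_k^{\top}$ is a top-$k$ truncated singular value decomposition of $W - w_c \mathbf{1}^{\top}$; (3) $M := w_c \mathbf{1}^{\top} + W_s \Gamma^{\top} \in \mathbb{R}^{m \times D}$, $v := (M^{+})^{\top} \mathbf{1} \in \mathbb{R}^m$ (where $M^+$ is the Moore–Penrose pseudoinverse of $M$), and $w_c^{\mathrm{new}} := v / \|v\|^2$; (4) $W_s^{\mathrm{new}} \in \mathbb{R}^{m\times k}$, $\Gamma^{\mathrm{new}} \in \mathbb{R}^{D \times k}$ any factorization with $W_s^{\mathrm{new}} (\Gamma^{\mathrm{new}})^{\top} = M - w_c^{\mathrm{new}} \mathbf{1}^{\top}$. Assume $M$ has rank $k+1$ (so that $v \neq 0$ and step (3) is well defined). Then $w_c^{\mathrm{new}} \perp \mathrm{Span}(W_s^{\mathrm{new}})$, and $(w_c^{\mathrm{new}}, W_s^{\mathrm{new}},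 \Gamma^{\mathrm{new}})$ is a minimizer of $f$ subject to the constraint $w_c \perp \mathrm{Span}(W_s)$; that is, the minimum of $f$ over the constraint set is attained and equals $\|W - M\|_F^2$.
   Context: $\|\cdot\|_F$ denotes the Frobenius norm. A top-$k$ truncated SVD of a matrix $A$ with SVD $A = U\Sigma V^{\top}$ (singular values in non-increasing order) is $U_k\Sigma_k V_k^{\top}$, where $U_k, V_k$ consist of the first $k$ columns of $U, V$ and $\Sigma_k$ is the leading $k\times k$ block of $\Sigma$. *)

theory Defs
  imports "Jordan_Normal_Form.DL_Rank"
begin

definition frob_sq :: "real mat \<Rightarrow> real" where
  "frob_sq A = (\<Sum>i<dim_row A. \<Sum>j<dim_col A. (A $$ (i,j))^2)"

definition ones_vec :: "nat \<Rightarrow> real vec" where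
  "ones_vec n = vec n (\<lambda>_. 1)"

definition outer :: "real vec \<Rightarrow> real vec \<Rightarrow> real mat" where
  "outer u v = mat (dim_vec u) (dim_vec v) (\<lambda>(i,j). u $ i * v $ j)"

definition col_span :: "real mat \<Rightarrow> real vec set" where
  "col_span A = {A *\<^sub>v y | y. y \<in> carrier_vec (dim_col A)}"

definition orth_to_span :: "real vec \<Rightarrow> real mat \<Rightarrow> bool" where
  "orth_to_span w A \<longleftrightarrow> (\<forall>x \<in> col_span A. w \<bullet> x = 0)"

definition orthogonal_sq :: "nat \<Rightarrow> real mat \<Rightarrow> bool" where
  "orthogonal_sq n Q \<longleftrightarrow> Q \<in> carrier_mat n n \<and> transpose_mat Q * Q = 1\<^sub>m n"

definition is_svd :: "real mat \<Rightarrow> real mat \<Rightarrow> real mat \<Rightarrow> real mat \<Rightarrow> bool" where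
  "is_svd A U S V \<longleftrightarrow>
     orthogonal_sq (dim_row A) U \<and> orthogonal_sq (dim_col A) V \<and>
     S \<in> carrier_mat (dim_row A) (dim_col A) \<and>
     (\<forall>i<dim_row A. \<forall>j<dim_col A. i \<noteq> j \<longrightarrow> S $$ (i,j) = 0) \<and>
     (\<forall>i<min (dim_row A) (dim_col A). S $$ (i,i) \<ge> 0) \<and>
     (\<forall>i j. i \<le> j \<longrightarrow> j < min (dim_row A) (dim_col A) \<longrightarrow> S $$ (j,j) \<le> S $$ (i,i)) \<and>
     A = U * S * transpose_mat V"

definition first_cols :: "nat \<Rightarrow> real mat \<Rightarrow> real mat" where
  "first_cols k A = mat (dim_row A) k (\<lambda>(i,j). A $$ (i,j))"

definition lead_block :: "nat \<Rightarrow> real mat \<Rightarrow> real mat" where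
  "lead_block k A = mat k k (\<lambda>(i,j). A $$ (i,j))"

definition is_pinv :: "real mat \<Rightarrow> real mat \<Rightarrow> bool" where
  "is_pinv M X \<longleftrightarrow> X \<in> carrier_mat (dim_col M) (dim_row M) \<and>
     M * X * M = M \<and> X * M * X = X \<and>
     transpose_mat (M * X) = M * X \<and> transpose_mat (X * M) = X * M"

definition pinv :: "real mat \<Rightarrow> real mat" where
  "pinv M = (THE X. is_pinv M X)"

definition obj :: "real mat \<Rightarrow> real vec \<Rightarrow> real mat \<Rightarrow> real mat \<Rightarrow> real" where
  "obj W wc Ws G = frob_sq (W - outer wc (ones_vec (dim_col W)) - Ws * transpose_mat G)"

definition mat_rank :: "real mat \<Rightarrow> nat" where
  "mat_rank A = vec_space.rank (dim_row A) A"

end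

theory Submission
  imports Defs
begin

text \<open>Let \<open>A = W - \<mu> \<one>\<^sup>T\<close> be the row-centred matrix, \<open>\<mu>\<close> the vector of row means.
  For any \<open>(w\<^sub>c, W\<^sub>s, \<Gamma>)\<close>, subtracting row means from the residual \<open>W - w\<^sub>c \<one>\<^sup>T - W\<^sub>s \<Gamma>\<^sup>T\<close> can only decrease its norm and turns
  it into \<open>A - W\<^sub>s \<Gamma>'\<^sup>T\<close> with \<open>\<Gamma>'\<close> column-centred; so by Eckart--Young the objective is at
  least \<open>\<Sum>\<^sub>q\<^sub>>\<^sub>k \<sigma>\<^sub>q\<^sup>2 = \<parallel>W - M\<parallel>\<^sub>F\<^sup>2\<close>, even without the orthogonality constraint.

  It remains to show that the new triple is feasible; it reproduces \<open>M\<close> by construction.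
  Since \<open>rank M = k + 1\<close>, \<open>M = Q R\<^sup>T\<close> with \<open>Q\<close> orthonormal and \<open>R\<close> injective. This gives
  the pseudoinverse, and the column of \<open>R\<close> coming from the centre is constant, so \<open>\<one>\<close> lies in
  the row space of \<open>M\<close> and \<open>v = (M\<^sup>+)\<^sup>T \<one>\<close> solves \<open>M\<^sup>T v = \<one>\<close>. Then \<open>w = v / |v|\<^sup>2\<close>
  satisfies \<open>M\<^sup>T w = |w|\<^sup>2 \<one>\<close>, i.e. \<open>w\<close> is orthogonal to the column space of
  \<open>M - w \<one>\<^sup>T = W\<^sub>s \<Gamma>\<^sup>T\<close>, and the rank condition forces \<open>\<Gamma>\<close> to have independent columns,
  whence \<open>w \<perp> Span(W\<^sub>s)\<close>.\<close>

section \<open>Orthonormal columns and least squares\<close>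

definition orthonormal_cols :: "nat \<Rightarrow> nat set \<Rightarrow> (nat \<Rightarrow> nat \<Rightarrow> real) \<Rightarrow> bool" where
  "orthonormal_cols N K Q \<longleftrightarrow>
     (\<forall>a\<in>K. \<forall>b\<in>K. (\<Sum>i<N. Q i a * Q i b) = (if a = b then 1 else 0))"

lemma orthonormal_cols_mono: "orthonormal_cols N K Q \<Longrightarrow> K' \<subseteq> K \<Longrightarrow> orthonormal_cols N K' Q"
  unfolding orthonormal_cols_def by blast

lemma orthonormal_cols_cong:
  assumes "\<And>i a. i < N \<Longrightarrow> a \<in> K \<Longrightarrow> Q i a = Q' i a"
  shows "orthonormal_cols N K Q \<longleftrightarrow> orthonormal_cols N K Q'"
proof -
  have "(\<Sum>i<N. Q i a * Q i b) = (\<Sum>i<N. Q' i a * Q' i b)" if "a \<in> K" "b \<in> K" for a b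
    using assms that by (intro sum.cong) auto
  then show ?thesis unfolding orthonormal_cols_def by simp
qed

lemma orthonormal_cols_extend:
  assumes oQ: "orthonormal_cols N {..<r} Q"
    and orth: "\<And>p. p < r \<Longrightarrow> (\<Sum>i<N. Q i p * w i) = 0"
    and unit: "(\<Sum>i<N. (w i)^2) = 1"
  shows "orthonormal_cols N {..<Suc r} (\<lambda>i p. if p = r then w i else Q i p)"
  unfolding orthonormal_cols_def
proof (intro ballI)
  fix a b assume "a \<in> {..<Suc r}" "b \<in> {..<Suc r}"
  then consider "a = r" "b = r" | "a = r" "b < r" | "a < r" "b = r" | "a < r" "b < r"
    by fastforce
  then show "(\<Sum>i<N. (if a = r then w i else Q i a) * (if b = r then w i else Q i b))
      = (if a = b then 1 else 0)"
    by cases (use oQ orth unit in \<open>auto simp: orthonormal_cols_def power2_eq_square mult.commute\<close>)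
qed

lemma orthonormal_cols_sum_sq:
  assumes oQ: "orthonormal_cols N K Q" and fin: "finite K"
  shows "(\<Sum>i<N. (\<Sum>q\<in>K. f q * Q i q)^2) = (\<Sum>q\<in>K. (f q)^2)"
proof -
  have "(\<Sum>i<N. (\<Sum>q\<in>K. f q * Q i q)^2)
      = (\<Sum>i<N. \<Sum>q\<in>K. \<Sum>q'\<in>K. f q * f q' * (Q i q * Q i q'))"
    by (simp add: power2_eq_square sum_product mult_ac)
  also have "\<dots> = (\<Sum>q\<in>K. \<Sum>q'\<in>K. f q * f q' * (\<Sum>i<N. Q i q * Q i q'))"
    by (simp add: sum.swap[of _ "{..<N}"] sum_distrib_left)
  also have "\<dots> = (\<Sum>q\<in>K. \<Sum>q'\<in>K. f q * f q' * (if q = q' then 1 else 0))"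
    using oQ unfolding orthonormal_cols_def by (intro sum.cong refl) simp
  also have "\<dots> = (\<Sum>q\<in>K. (f q)^2)"
    using fin by (simp add: power2_eq_square if_distrib sum.delta cong: if_cong)
  finally show ?thesis .
qed

lemma orthonormal_cols_sum_sq_rank_one_sum:
  assumes oU: "orthonormal_cols m K U" and oV: "orthonormal_cols D K V" and fin: "finite K"
  shows "(\<Sum>i<m. \<Sum>j<D. (\<Sum>q\<in>K. s q * U i q * V j q)^2) = (\<Sum>q\<in>K. (s q)^2)"
proof -
  have "(\<Sum>i<m. \<Sum>j<D. (\<Sum>q\<in>K. s q * U i q * V j q)^2) = (\<Sum>i<m. \<Sum>q\<in>K. (s q * U i q)^2)"
    using orthonormal_cols_sum_sq[OF oV fin, of "\<lambda>q. s q * U _ q"] by simp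
  also have "\<dots> = (\<Sum>q\<in>K. (s q)^2 * (\<Sum>i<m. U i q * U i q))"
    by (simp add: sum.swap[of _ "{..<m}"] sum_distrib_left power2_eq_square mult_ac)
  also have "\<dots> = (\<Sum>q\<in>K. (s q)^2)"
    using oU unfolding orthonormal_cols_def by simp
  finally show ?thesis .
qed

lemma orthonormal_residual_sum_sq:
  assumes oQ: "orthonormal_cols D {..<r} Q"
  shows "(\<Sum>j<D. (a j - (\<Sum>p<r. Q j p * z p))^2) =
     (\<Sum>j<D. (a j)^2) - 2 * (\<Sum>p<r. z p * (\<Sum>j<D. Q j p * a j)) + (\<Sum>p<r. (z p)^2)"
proof -
  have sq: "(\<Sum>j<D. (\<Sum>p<r. Q j p * z p)^2) = (\<Sum>p<r. (z p)^2)"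
    using orthonormal_cols_sum_sq[OF oQ, of z] by (simp add: mult_ac)
  have cross: "(\<Sum>j<D. a j * (\<Sum>p<r. Q j p * z p)) = (\<Sum>p<r. z p * (\<Sum>j<D. Q j p * a j))"
    by (simp add: sum_distrib_left sum.swap[of _ "{..<D}"] mult_ac)
  have "(\<Sum>j<D. (a j - (\<Sum>p<r. Q j p * z p))^2) =
     (\<Sum>j<D. (a j)^2) - 2 * (\<Sum>j<D. a j * (\<Sum>p<r. Q j p * z p)) + (\<Sum>j<D. (\<Sum>p<r. Q j p * z p)^2)"
    by (simp add: power2_diff sum_subtractf sum.distrib sum_distrib_left mult_ac)
  then show ?thesis using sq cross by simp
qed

lemma orthonormal_residual_ge:
  assumes oQ: "orthonormal_cols D {..<r} Q"
  shows "(\<Sum>j<D. (a j)^2) - (\<Sum>p<r. (\<Sum>j<D. Q j p * a j)^2)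
    \<le> (\<Sum>j<D. (a j - (\<Sum>p<r. Q j p * z p))^2)"
proof -
  have "(\<Sum>p<r. (\<Sum>j<D. Q j p * a j)^2) - 2 * (\<Sum>p<r. z p * (\<Sum>j<D. Q j p * a j)) + (\<Sum>p<r. (z p)^2)
     = (\<Sum>p<r. (z p - (\<Sum>j<D. Q j p * a j))^2)"
    by (simp add: power2_diff sum_subtractf sum.distrib sum_distrib_left mult_ac)
  also have "\<dots> \<ge> 0" by (simp add: sum_nonneg)
  finally show ?thesis unfolding orthonormal_residual_sum_sq[OF oQ] by linarith
qed

lemma bessel_inequality:
  assumes oQ: "orthonormal_cols D {..<r} Q"
  shows "(\<Sum>p<r. (\<Sum>j<D. Q j p * a j)^2) \<le> (\<Sum>j<D. (a j)^2)"
proof -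
  have "0 \<le> (\<Sum>j<D. (a j - (\<Sum>p<r. Q j p * (\<Sum>j<D. Q j p * a j)))^2)"
    by (simp add: sum_nonneg)
  also have "\<dots> = (\<Sum>j<D. (a j)^2) - (\<Sum>p<r. (\<Sum>j<D. Q j p * a j)^2)"
    unfolding orthonormal_residual_sum_sq[OF oQ] by (simp add: power2_eq_square)
  finally show ?thesis by simp
qed

lemma projection_residual_orthogonal:
  assumes oQ: "orthonormal_cols D {..<r} Q" and a: "a < r"
  shows "(\<Sum>j<D. Q j a * (y j - (\<Sum>p<r. Q j p * (\<Sum>j'<D. Q j' p * y j')))) = 0"
proof -
  have "(\<Sum>j<D. Q j a * (\<Sum>p<r. Q j p * (\<Sum>j'<D. Q j' p * y j')))
      = (\<Sum>j<D. \<Sum>p<r. Q j a * Q j p * (\<Sum>j'<D. Q j' p * y j'))"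
    by (simp add: sum_distrib_left mult.assoc)
  also have "\<dots> = (\<Sum>p<r. (\<Sum>j<D. Q j a * Q j p) * (\<Sum>j'<D. Q j' p * y j'))"
    by (subst sum.swap) (simp add: sum_distrib_right)
  also have "\<dots> = (\<Sum>p<r. (if a = p then (\<Sum>j'<D. Q j' p * y j') else 0))"
    using oQ a unfolding orthonormal_cols_def by (intro sum.cong refl) auto
  also have "\<dots> = (\<Sum>j<D. Q j a * y j)" using a by simp
  finally show ?thesis by (simp add: right_diff_distrib sum_subtractf)
qed

lemma sum_sq_normalised:
  assumes "0 < (\<Sum>i<N. (w i)^2)"
  shows "(\<Sum>i<N. (w i / sqrt (\<Sum>i<N. (w i)^2))^2) = 1"
  using assms by (simp add: power_divide sum_divide_distrib[symmetric])

lemma orthonormal_span_exists: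
  fixes Y :: "nat \<Rightarrow> nat \<Rightarrow> real"
  shows "\<exists>r Q Z. r \<le> k \<and> orthonormal_cols D {..<r} Q \<and>
           (\<forall>j<D. \<forall>l<k. Y j l = (\<Sum>p<r. Q j p * Z p l))"
proof (induction k)
  case 0
  show ?case by (rule exI[of _ 0]) (auto simp: orthonormal_cols_def)
next
  case (Suc k)
  then obtain r Q Z where r: "r \<le> k" and oQ: "orthonormal_cols D {..<r} Q"
    and rep: "\<forall>j<D. \<forall>l<k. Y j l = (\<Sum>p<r. Q j p * Z p l)" by blast
  define \<alpha> where "\<alpha> p = (\<Sum>j<D. Q j p * Y j k)" for p
  define w where "w j = Y j k - (\<Sum>p<r. Q j p * \<alpha> p)" for j
  define \<nu> where "\<nu> = (\<Sum>j<D. (w j)^2)"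
  have Yk: "Y j k = (\<Sum>p<r. Q j p * \<alpha> p) + w j" for j
    by (simp add: w_def)
  show ?case
  proof (cases "\<nu> = 0")
    case True
    then have "w j = 0" if "j < D" for j
      using that sum_nonneg_eq_0_iff[of "{..<D}" "\<lambda>j. (w j)^2"] by (simp add: \<nu>_def)
    then show ?thesis
      using r oQ rep Yk
      by (intro exI[of _ r] exI[of _ Q] exI[of _ "\<lambda>p l. if l = k then \<alpha> p else Z p l"])
        (auto simp: less_Suc_eq)
  next
    case False
    then have \<nu>pos: "0 < \<nu>" unfolding \<nu>_def by (simp add: less_le sum_nonneg)
    define n where "n = sqrt \<nu>"
    have npos: "0 < n" using \<nu>pos by (simp add: n_def)
    define Q' where "Q' j p = (if p = r then w j / n else Q j p)" for j p
    define Z' where "Z' p l = (if p = r then (if l = k then n else 0)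
                               else if l = k then \<alpha> p else Z p l)" for p l
    have oQ': "orthonormal_cols D {..<Suc r} Q'"
      unfolding Q'_def n_def \<nu>_def
    proof (rule orthonormal_cols_extend[OF oQ])
      show "(\<Sum>j<D. Q j p * (w j / sqrt (\<Sum>j<D. (w j)^2))) = 0" if "p < r" for p
        using projection_residual_orthogonal[OF oQ that, of "\<lambda>j. Y j k"]
        by (simp add: w_def \<alpha>_def sum_divide_distrib[symmetric])
      show "(\<Sum>j<D. (w j / sqrt (\<Sum>j<D. (w j)^2))^2) = 1"
        using \<nu>pos by (intro sum_sq_normalised) (simp add: \<nu>_def)
    qed
    have "Y j l = (\<Sum>p<Suc r. Q' j p * Z' p l)" if "j < D" "l < Suc k" for j l
      using that rep Yk npos by (auto simp: Q'_def Z'_def less_Suc_eq)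
    then show ?thesis using r oQ' by (intro exI[of _ "Suc r"]) blast
  qed
qed

lemma tail_sum_le_weighted_sum:
  fixes s c :: "nat \<Rightarrow> real"
  assumes nonneg: "\<And>q. q < n \<Longrightarrow> 0 \<le> s q"
    and mono: "\<And>i j. i \<le> j \<Longrightarrow> j < n \<Longrightarrow> s j \<le> s i"
    and c01: "\<And>q. q < n \<Longrightarrow> 0 \<le> c q \<and> c q \<le> 1"
    and csum: "(\<Sum>q<n. c q) \<le> real k"
  shows "(\<Sum>q\<in>{k..<n}. s q) \<le> (\<Sum>q<n. s q * (1 - c q))"
proof (cases "k < n")
  case False
  then have "{k..<n} = {}" by auto
  moreover have "0 \<le> (\<Sum>q<n. s q * (1 - c q))"
    using nonneg c01 by (intro sum_nonneg) simp
  ultimately show ?thesis by simp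
next
  case True
  define t where "t = s k"
  have split: "(\<Sum>q<n. f q) = (\<Sum>q<k. f q) + (\<Sum>q\<in>{k..<n}. f q)" for f :: "nat \<Rightarrow> real"
    using True by (metis less_imp_le_nat atLeast0LessThan sum.atLeastLessThan_concat zero_le)
  have head: "(\<Sum>q<k. t * (1 - c q)) \<le> (\<Sum>q<k. s q * (1 - c q))"
    using mono c01 True by (intro sum_mono mult_right_mono) (auto simp: t_def)
  have tail: "(\<Sum>q\<in>{k..<n}. s q * c q) \<le> (\<Sum>q\<in>{k..<n}. t * c q)"
    using mono c01 by (intro sum_mono mult_right_mono) (auto simp: t_def)
  have "(\<Sum>q<k. t * (1 - c q)) - (\<Sum>q\<in>{k..<n}. t * c q) = t * (real k - (\<Sum>q<n. c q))"
    unfolding split[of c] by (simp add: sum_distrib_left[symmetric] sum_subtractf algebra_simps)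
  also have "\<dots> \<ge> 0" using nonneg True csum by (simp add: t_def)
  finally have "0 \<le> (\<Sum>q<k. t * (1 - c q)) - (\<Sum>q\<in>{k..<n}. t * c q)" .
  moreover have "(\<Sum>q<n. s q * (1 - c q)) - (\<Sum>q\<in>{k..<n}. s q)
      = (\<Sum>q<k. s q * (1 - c q)) - (\<Sum>q\<in>{k..<n}. s q * c q)"
    unfolding split[of "\<lambda>q. s q * (1 - c q)"] by (simp add: algebra_simps sum_subtractf)
  ultimately show ?thesis using head tail by linarith
qed

lemma projection_weight_bounds:
  assumes oQ: "orthonormal_cols D {..<r} Q" and oV: "orthonormal_cols D {..<n} V" and q: "q < n"
  shows "0 \<le> (\<Sum>p<r. (\<Sum>j<D. Q j p * V j q)^2) \<and> (\<Sum>p<r. (\<Sum>j<D. Q j p * V j q)^2) \<le> 1"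
proof
  show "0 \<le> (\<Sum>p<r. (\<Sum>j<D. Q j p * V j q)^2)" by (simp add: sum_nonneg)
  have "(\<Sum>p<r. (\<Sum>j<D. Q j p * V j q)^2) \<le> (\<Sum>j<D. (V j q)^2)" by (rule bessel_inequality[OF oQ])
  also have "\<dots> = 1" using oV q by (simp add: orthonormal_cols_def power2_eq_square)
  finally show "(\<Sum>p<r. (\<Sum>j<D. Q j p * V j q)^2) \<le> 1" .
qed

lemma projection_weights_sum:
  assumes oQ: "orthonormal_cols D {..<r} Q" and oVr: "orthonormal_cols D {..<D} (\<lambda>q j. V j q)"
  shows "(\<Sum>q<D. \<Sum>p<r. (\<Sum>j<D. Q j p * V j q)^2) = real r"
proof -
  have "(\<Sum>q<D. \<Sum>p<r. (\<Sum>j<D. Q j p * V j q)^2) = (\<Sum>p<r. \<Sum>q<D. (\<Sum>j<D. Q j p * V j q)^2)"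
    by (rule sum.swap)
  also have "\<dots> = (\<Sum>p<r. \<Sum>j<D. (Q j p)^2)"
    by (intro sum.cong refl orthonormal_cols_sum_sq[OF oVr]) simp
  also have "\<dots> = (\<Sum>p<r. 1)"
    using oQ unfolding orthonormal_cols_def by (intro sum.cong refl) (simp add: power2_eq_square)
  finally show ?thesis by simp
qed

text \<open>Eckart--Young: for \<open>A = \<Sum>\<^sub>q \<sigma>\<^sub>q u\<^sub>q v\<^sub>q\<^sup>T\<close>, project the rows of \<open>A\<close> onto an
  orthonormal basis \<open>Q\<close> of the span of the columns of \<open>Y\<close>. The captured energy is
  \<open>\<Sum>\<^sub>q \<sigma>\<^sub>q\<^sup>2 c\<^sub>q\<close> with weights \<open>c\<^sub>q = |Q\<^sup>T v\<^sub>q|\<^sup>2 \<in> [0,1]\<close> of total mass at most \<open>k\<close>.\<close>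

lemma eckart_young_lower_bound:
  fixes A X Y U V :: "nat \<Rightarrow> nat \<Rightarrow> real" and \<sigma> :: "nat \<Rightarrow> real"
  assumes oU: "orthonormal_cols m {..<n} U" and oV: "orthonormal_cols D {..<n} V"
    and oVr: "orthonormal_cols D {..<D} (\<lambda>q j. V j q)" and nD: "n \<le> D"
    and \<sigma>_nonneg: "\<And>q. q < n \<Longrightarrow> 0 \<le> \<sigma> q"
    and \<sigma>_mono: "\<And>i j. i \<le> j \<Longrightarrow> j < n \<Longrightarrow> \<sigma> j \<le> \<sigma> i"
    and A: "\<And>i j. i < m \<Longrightarrow> j < D \<Longrightarrow> A i j = (\<Sum>q<n. \<sigma> q * U i q * V j q)"
  shows "(\<Sum>q\<in>{k..<n}. (\<sigma> q)^2) \<le> (\<Sum>i<m. \<Sum>j<D. (A i j - (\<Sum>l<k. X i l * Y j l))^2)"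
proof -
  obtain r Q Z where r: "r \<le> k" and oQ: "orthonormal_cols D {..<r} Q"
    and Y: "\<forall>j<D. \<forall>l<k. Y j l = (\<Sum>p<r. Q j p * Z p l)"
    using orthonormal_span_exists[of k D Y] by blast
  define T where "T q p = (\<Sum>j<D. Q j p * V j q)" for q p
  define c where "c q = (\<Sum>p<r. (T q p)^2)" for q
  have XY: "(\<Sum>l<k. X i l * Y j l) = (\<Sum>p<r. Q j p * (\<Sum>l<k. X i l * Z p l))" if "j < D" for i j
    using Y that by (simp add: sum_distrib_left sum.swap[of _ "{..<k}"] mult_ac)
  have QA: "(\<Sum>j<D. Q j p * A i j) = (\<Sum>q<n. (\<sigma> q * T q p) * U i q)" if "i < m" for i p
    using A that by (simp add: T_def sum_distrib_left sum.swap[of _ "{..<D}"] mult_ac)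
  have energy: "(\<Sum>i<m. \<Sum>j<D. (A i j)^2) = (\<Sum>q<n. (\<sigma> q)^2)"
    using orthonormal_cols_sum_sq_rank_one_sum[OF oU oV, of \<sigma>] A by simp
  have captured: "(\<Sum>i<m. \<Sum>p<r. (\<Sum>j<D. Q j p * A i j)^2) = (\<Sum>q<n. (\<sigma> q)^2 * c q)"
  proof -
    have "(\<Sum>i<m. \<Sum>p<r. (\<Sum>j<D. Q j p * A i j)^2)
        = (\<Sum>p<r. \<Sum>i<m. (\<Sum>q<n. (\<sigma> q * T q p) * U i q)^2)"
      by (subst sum.swap) (simp add: QA)
    also have "\<dots> = (\<Sum>p<r. \<Sum>q<n. (\<sigma> q * T q p)^2)"
      by (intro sum.cong refl orthonormal_cols_sum_sq[OF oU]) simp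
    also have "\<dots> = (\<Sum>q<n. (\<sigma> q)^2 * c q)"
      unfolding c_def by (subst sum.swap) (simp add: sum_distrib_left power_mult_distrib)
    finally show ?thesis .
  qed
  have c01: "0 \<le> c q \<and> c q \<le> 1" if "q < n" for q
    unfolding c_def T_def by (rule projection_weight_bounds[OF oQ oV that])
  have "(\<Sum>q<n. c q) \<le> (\<Sum>q<D. c q)"
    using nD by (intro sum_mono2) (auto simp: c_def sum_nonneg)
  also have "\<dots> = real r" unfolding c_def T_def by (rule projection_weights_sum[OF oQ oVr])
  finally have csum: "(\<Sum>q<n. c q) \<le> real k" using r by simp
  have "(\<Sum>q\<in>{k..<n}. (\<sigma> q)^2) \<le> (\<Sum>q<n. (\<sigma> q)^2 * (1 - c q))"
    using \<sigma>_nonneg \<sigma>_mono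
    by (intro tail_sum_le_weighted_sum[OF _ _ c01 csum]) (auto intro: power_mono)
  also have "\<dots> = (\<Sum>i<m. \<Sum>j<D. (A i j)^2) - (\<Sum>i<m. \<Sum>p<r. (\<Sum>j<D. Q j p * A i j)^2)"
    unfolding energy captured by (simp add: algebra_simps sum_subtractf)
  also have "\<dots> \<le> (\<Sum>i<m. \<Sum>j<D. (A i j - (\<Sum>p<r. Q j p * (\<Sum>l<k. X i l * Z p l)))^2)"
    unfolding sum_subtractf[symmetric] by (intro sum_mono orthonormal_residual_ge[OF oQ])
  also have "\<dots> = (\<Sum>i<m. \<Sum>j<D. (A i j - (\<Sum>l<k. X i l * Y j l))^2)"
    using XY by simp
  finally show ?thesis .
qed

lemma sum_sq_centred_le:
  fixes x :: "nat \<Rightarrow> real"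
  shows "(\<Sum>j<D. (x j - (\<Sum>j'<D. x j') / real D)^2) \<le> (\<Sum>j<D. (x j)^2)"
proof -
  define c where "c = (\<Sum>j'<D. x j') / real D"
  have sx: "(\<Sum>j<D. x j) = c * real D"
    by (cases "D = 0") (simp_all add: c_def)
  have "(\<Sum>j<D. (x j - c)^2) = (\<Sum>j<D. (x j)^2) - 2 * c * (\<Sum>j<D. x j) + real D * c^2"
    by (simp add: power2_diff sum_subtractf sum.distrib sum_distrib_left mult_ac)
  also have "\<dots> = (\<Sum>j<D. (x j)^2) - real D * c^2" unfolding sx by (simp add: power2_eq_square)
  also have "\<dots> \<le> (\<Sum>j<D. (x j)^2)" by simp
  finally show ?thesis unfolding c_def .
qed

lemma centred_residual_eq:
  fixes a c :: "nat \<Rightarrow> real" and Y :: "nat \<Rightarrow> nat \<Rightarrow> real" and b :: real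
  assumes D: "0 < D" and r: "\<And>j. r j = a j - b - (\<Sum>l<k. c l * Y j l)"
  shows "r j - (\<Sum>j'<D. r j') / real D
       = (a j - (\<Sum>j'<D. a j') / real D) - (\<Sum>l<k. c l * (Y j l - (\<Sum>j'<D. Y j' l) / real D))"
proof -
  have "(\<Sum>j'<D. r j') = (\<Sum>j'<D. a j') - real D * b - (\<Sum>l<k. c l * (\<Sum>j'<D. Y j' l))"
    by (simp add: r sum_subtractf sum_distrib_left sum.swap[of _ "{..<D}"])
  moreover have "(\<Sum>l<k. c l * (\<Sum>j'<D. Y j' l)) / real D = (\<Sum>l<k. c l * ((\<Sum>j'<D. Y j' l) / real D))"
    by (simp only: sum_divide_distrib[of _ "{..<k}"] times_divide_eq_right)
  ultimately have "(\<Sum>j'<D. r j') / real D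
      = (\<Sum>j'<D. a j') / real D - b - (\<Sum>l<k. c l * ((\<Sum>j'<D. Y j' l) / real D))"
    using D by (simp add: diff_divide_distrib)
  then show ?thesis by (simp add: r right_diff_distrib sum_subtractf)
qed

text \<open>A free offset does not beat centring: subtracting row means can only decrease the
  residual, and it turns the problem into the offset-free one for the centred matrix.\<close>

lemma eckart_young_offset_lower_bound:
  fixes W X Y U V :: "nat \<Rightarrow> nat \<Rightarrow> real" and \<sigma> w :: "nat \<Rightarrow> real"
  assumes oU: "orthonormal_cols m {..<n} U" and oV: "orthonormal_cols D {..<n} V"
    and oVr: "orthonormal_cols D {..<D} (\<lambda>q j. V j q)" and nD: "n \<le> D" and D: "0 < D"
    and \<sigma>_nonneg: "\<And>q. q < n \<Longrightarrow> 0 \<le> \<sigma> q"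
    and \<sigma>_mono: "\<And>i j. i \<le> j \<Longrightarrow> j < n \<Longrightarrow> \<sigma> j \<le> \<sigma> i"
    and W: "\<And>i j. i < m \<Longrightarrow> j < D \<Longrightarrow>
              W i j - (\<Sum>j'<D. W i j') / real D = (\<Sum>q<n. \<sigma> q * U i q * V j q)"
  shows "(\<Sum>q\<in>{k..<n}. (\<sigma> q)^2) \<le> (\<Sum>i<m. \<Sum>j<D. (W i j - w i - (\<Sum>l<k. X i l * Y j l))^2)"
proof -
  define A where "A i j = W i j - (\<Sum>j'<D. W i j') / real D" for i j
  define Y' where "Y' j l = Y j l - (\<Sum>j'<D. Y j' l) / real D" for j l
  define R where "R i j = W i j - w i - (\<Sum>l<k. X i l * Y j l)" for i j
  have "(\<Sum>q\<in>{k..<n}. (\<sigma> q)^2) \<le> (\<Sum>i<m. \<Sum>j<D. (A i j - (\<Sum>l<k. X i l * Y' j l))^2)"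
    by (intro eckart_young_lower_bound[OF oU oV oVr nD \<sigma>_nonneg \<sigma>_mono]) (use W in \<open>auto simp: A_def\<close>)
  also have "\<dots> = (\<Sum>i<m. \<Sum>j<D. (R i j - (\<Sum>j'<D. R i j') / real D)^2)"
  proof -
    have "R i j - (\<Sum>j'<D. R i j') / real D = A i j - (\<Sum>l<k. X i l * Y' j l)" for i j
      unfolding A_def Y'_def
      by (rule centred_residual_eq[OF D, where a="W i" and b="w i" and c="X i"]) (simp add: R_def)
    then show ?thesis by simp
  qed
  also have "\<dots> \<le> (\<Sum>i<m. \<Sum>j<D. (R i j)^2)"
    by (intro sum_mono sum_sq_centred_le)
  finally show ?thesis by (simp add: R_def)
qed

section \<open>Matrix entries and singular value decompositions\<close>

lemma mat_mult_entry:
  assumes "A \<in> carrier_mat a b" "B \<in> carrier_mat b c" "i < a" "j < c"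
  shows "(A * B) $$ (i,j) = (\<Sum>l<b. A $$ (i,l) * B $$ (l,j))"
  using assms by (simp add: scalar_prod_def atLeast0LessThan)

lemma mat_mult_vec_entry:
  assumes "A \<in> carrier_mat a b" "v \<in> carrier_vec b" "i < a"
  shows "(A *\<^sub>v v) $ i = (\<Sum>l<b. A $$ (i,l) * v $ l)"
  using assms by (simp add: scalar_prod_def atLeast0LessThan)

lemma mat_mult_transpose_entry:
  assumes "A \<in> carrier_mat a b" "B \<in> carrier_mat c b" "i < a" "j < c"
  shows "(A * transpose_mat B) $$ (i,j) = (\<Sum>l<b. A $$ (i,l) * B $$ (j,l))"
  using assms by (auto simp: scalar_prod_def atLeast0LessThan intro!: sum.cong)

lemma ones_vec_simps [simp]:
  "dim_vec (ones_vec n) = n" "j < n \<Longrightarrow> ones_vec n $ j = 1" "ones_vec n \<in> carrier_vec n"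
  by (auto simp: ones_vec_def)

lemma outer_simps [simp]:
  "dim_row (outer u v) = dim_vec u" "dim_col (outer u v) = dim_vec v"
  "i < dim_vec u \<Longrightarrow> j < dim_vec v \<Longrightarrow> outer u v $$ (i,j) = u $ i * v $ j"
  by (auto simp: outer_def)

lemma outer_carrier [simp]:
  "u \<in> carrier_vec m \<Longrightarrow> v \<in> carrier_vec n \<Longrightarrow> outer u v \<in> carrier_mat m n"
  by (auto simp: outer_def)

lemma frob_sq_eq_sum:
  assumes "A \<in> carrier_mat m n" "\<And>i j. i < m \<Longrightarrow> j < n \<Longrightarrow> A $$ (i,j) = f i j"
  shows "frob_sq A = (\<Sum>i<m. \<Sum>j<n. (f i j)^2)"
  using assms unfolding frob_sq_def by (auto intro!: sum.cong)

lemma orthonormal_cols_iff: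
  assumes Q: "Q \<in> carrier_mat n r"
  shows "transpose_mat Q * Q = 1\<^sub>m r \<longleftrightarrow> orthonormal_cols n {..<r} (\<lambda>i j. Q $$ (i,j))"
proof -
  have "(transpose_mat Q * Q) $$ (a,b) = (\<Sum>i<n. Q $$ (i,a) * Q $$ (i,b))" if "a < r" "b < r" for a b
    using Q that by (auto simp: scalar_prod_def atLeast0LessThan intro!: sum.cong)
  then show ?thesis
    using Q unfolding orthonormal_cols_def by (auto simp: mat_eq_iff)
qed

lemma orthogonal_sq_orthonormal_rows:
  assumes "orthogonal_sq n V"
  shows "orthonormal_cols n {..<n} (\<lambda>i j. V $$ (j,i))"
proof -
  have V: "V \<in> carrier_mat n n" and "transpose_mat V * V = 1\<^sub>m n"
    using assms by (auto simp: orthogonal_sq_def)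
  then have "transpose_mat (transpose_mat V) * transpose_mat V = 1\<^sub>m n"
    using mat_mult_left_right_inverse[of "transpose_mat V" n V] by simp
  then have "orthonormal_cols n {..<n} (\<lambda>i j. transpose_mat V $$ (i,j))"
    using V orthonormal_cols_iff[of "transpose_mat V" n n] by simp
  then show ?thesis
    using V by (subst orthonormal_cols_cong[where Q'="\<lambda>i j. transpose_mat V $$ (i,j)"]) auto
qed

lemma diagonal_factorisation_entry:
  fixes U S V :: "real mat"
  assumes U: "U \<in> carrier_mat m m" and S: "S \<in> carrier_mat m D" and V: "V \<in> carrier_mat D D"
    and diag: "\<And>i j. i < m \<Longrightarrow> j < D \<Longrightarrow> i \<noteq> j \<Longrightarrow> S $$ (i,j) = 0"
    and i: "i < m" and j: "j < D"
  shows "(U * S * transpose_mat V) $$ (i,j) = (\<Sum>q<min m D. S $$ (q,q) * U $$ (i,q) * V $$ (j,q))"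
proof -
  have US: "(U * S) $$ (i,b) = (if b < m then U $$ (i,b) * S $$ (b,b) else 0)" if b: "b < D" for b
  proof -
    have "(U * S) $$ (i,b) = (\<Sum>a<m. U $$ (i,a) * S $$ (a,b))" using U S i b by (intro mat_mult_entry)
    also have "\<dots> = (\<Sum>a<m. if a = b then U $$ (i,b) * S $$ (b,b) else 0)"
      using diag b by (intro sum.cong) auto
    finally show ?thesis by simp
  qed
  have "(U * S * transpose_mat V) $$ (i,j) = (\<Sum>b<D. (U * S) $$ (i,b) * V $$ (j,b))"
    using U S V i j by (intro mat_mult_transpose_entry[of _ m D]) auto
  also have "\<dots> = (\<Sum>b<D. if b < m then S $$ (b,b) * U $$ (i,b) * V $$ (j,b) else 0)"
    using US by (intro sum.cong) (auto simp: mult_ac)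
  also have "\<dots> = (\<Sum>b\<in>{..<D} \<inter> {b. b < m}. S $$ (b,b) * U $$ (i,b) * V $$ (j,b))"
    by (simp add: sum.inter_restrict)
  also have "{..<D} \<inter> {b. b < m} = {..<min m D}" by auto
  finally show ?thesis .
qed

lemma truncated_factorisation_entry:
  fixes U S V :: "real mat"
  assumes U: "U \<in> carrier_mat m m" and S: "S \<in> carrier_mat m D" and V: "V \<in> carrier_mat D D"
    and diag: "\<And>i j. i < m \<Longrightarrow> j < D \<Longrightarrow> i \<noteq> j \<Longrightarrow> S $$ (i,j) = 0"
    and km: "k \<le> m" and kD: "k \<le> D" and i: "i < m" and j: "j < D"
  shows "(first_cols k U * lead_block k S * transpose_mat (first_cols k V)) $$ (i,j)
        = (\<Sum>q<k. S $$ (q,q) * U $$ (i,q) * V $$ (j,q))"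
proof -
  have FU: "first_cols k U \<in> carrier_mat m k" and LS: "lead_block k S \<in> carrier_mat k k"
    and FV: "first_cols k V \<in> carrier_mat D k"
    using U V by (auto simp: first_cols_def lead_block_def)
  have US: "(first_cols k U * lead_block k S) $$ (i,b) = U $$ (i,b) * S $$ (b,b)" if b: "b < k" for b
  proof -
    have "(first_cols k U * lead_block k S) $$ (i,b)
        = (\<Sum>a<k. first_cols k U $$ (i,a) * lead_block k S $$ (a,b))"
      using FU LS i b by (intro mat_mult_entry)
    also have "\<dots> = (\<Sum>a<k. if a = b then U $$ (i,b) * S $$ (b,b) else 0)"
      using diag b km kD i U by (intro sum.cong) (auto simp: first_cols_def lead_block_def)
    finally show ?thesis using b by simp
  qed
  have "(first_cols k U * lead_block k S * transpose_mat (first_cols k V)) $$ (i,j)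
      = (\<Sum>b<k. (first_cols k U * lead_block k S) $$ (i,b) * first_cols k V $$ (j,b))"
    using FU LS FV i j by (intro mat_mult_transpose_entry[of _ m k]) auto
  then show ?thesis
    using US j V by (simp add: first_cols_def mult_ac)
qed

lemma is_svd_entry:
  assumes svd: "is_svd A U S V" and A: "A \<in> carrier_mat m D" and i: "i < m" and j: "j < D"
  shows "A $$ (i,j) = (\<Sum>q<min m D. S $$ (q,q) * U $$ (i,q) * V $$ (j,q))"
  using svd A diagonal_factorisation_entry[OF _ _ _ _ i j, of U S V]
  by (auto simp: is_svd_def orthogonal_sq_def)

lemma is_svd_orthonormal:
  assumes svd: "is_svd A U S V" and A: "A \<in> carrier_mat m D"
  shows "orthonormal_cols m {..<m} (\<lambda>i q. U $$ (i,q))"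
    and "orthonormal_cols D {..<D} (\<lambda>j q. V $$ (j,q))"
    and "orthonormal_cols D {..<D} (\<lambda>q j. V $$ (j,q))"
  using svd A orthonormal_cols_iff[of U m m] orthonormal_cols_iff[of V D D]
    orthogonal_sq_orthonormal_rows[of D V]
  by (auto simp: is_svd_def orthogonal_sq_def)

lemma is_svd_truncation:
  assumes svd: "is_svd A U S V" and A: "A \<in> carrier_mat m D" and km: "k \<le> m" and kD: "k \<le> D"
  shows "first_cols k U * lead_block k S * transpose_mat (first_cols k V) \<in> carrier_mat m D"
    and "\<And>i j. i < m \<Longrightarrow> j < D \<Longrightarrow>
      (first_cols k U * lead_block k S * transpose_mat (first_cols k V)) $$ (i,j)
        = (\<Sum>q<k. S $$ (q,q) * U $$ (i,q) * V $$ (j,q))"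
proof -
  have U: "U \<in> carrier_mat m m" and S: "S \<in> carrier_mat m D" and V: "V \<in> carrier_mat D D"
    and diag: "\<And>i j. i < m \<Longrightarrow> j < D \<Longrightarrow> i \<noteq> j \<Longrightarrow> S $$ (i,j) = 0"
    using svd A by (auto simp: is_svd_def orthogonal_sq_def)
  show "first_cols k U * lead_block k S * transpose_mat (first_cols k V) \<in> carrier_mat m D"
    using U V by (auto simp: first_cols_def lead_block_def)
  show "(first_cols k U * lead_block k S * transpose_mat (first_cols k V)) $$ (i,j)
      = (\<Sum>q<k. S $$ (q,q) * U $$ (i,q) * V $$ (j,q))" if "i < m" "j < D" for i j
    by (rule truncated_factorisation_entry[OF U S V diag km kD that])
qed

lemma truncated_svd_error:
  assumes svd: "is_svd A U S V" and A: "A \<in> carrier_mat m D" and km: "k \<le> m" and kD: "k \<le> D"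
  shows "frob_sq (A - first_cols k U * lead_block k S * transpose_mat (first_cols k V))
       = (\<Sum>q\<in>{k..<min m D}. (S $$ (q,q))^2)"
proof -
  let ?T = "first_cols k U * lead_block k S * transpose_mat (first_cols k V)"
  note T = is_svd_truncation[OF svd A km kD]
  have split: "(\<Sum>q<min m D. f q) = (\<Sum>q<k. f q) + (\<Sum>q\<in>{k..<min m D}. f q)"
    for f :: "nat \<Rightarrow> real"
    using km kD by (metis atLeast0LessThan min.bounded_iff sum.atLeastLessThan_concat zero_le)
  have "(A - ?T) $$ (i,j) = (\<Sum>q\<in>{k..<min m D}. S $$ (q,q) * U $$ (i,q) * V $$ (j,q))"
    if "i < m" "j < D" for i j
    using that carrier_matD[OF A] carrier_matD[OF T(1)] is_svd_entry[OF svd A that] T(2)[OF that]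
    by (simp add: split)
  then have "frob_sq (A - ?T)
      = (\<Sum>i<m. \<Sum>j<D. (\<Sum>q\<in>{k..<min m D}. S $$ (q,q) * U $$ (i,q) * V $$ (j,q))^2)"
    using T(1) by (intro frob_sq_eq_sum minus_carrier_mat)
  also have "\<dots> = (\<Sum>q\<in>{k..<min m D}. (S $$ (q,q))^2)"
    using is_svd_orthonormal(1,2)[OF svd A]
    by (intro orthonormal_cols_sum_sq_rank_one_sum) (auto elim: orthonormal_cols_mono)
  finally show ?thesis .
qed

lemma row_mean_entry:
  assumes W: "W \<in> carrier_mat m D" and i: "i < m"
  shows "((1 / real D) \<cdot>\<^sub>v (W *\<^sub>v ones_vec D)) $ i = (\<Sum>j<D. W $$ (i,j)) / real D"
  using W i mat_mult_vec_entry[OF W ones_vec_simps(3) i] by simp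

lemma obj_eq_sum:
  assumes W: "W \<in> carrier_mat m D" and wc: "wc \<in> carrier_vec m"
    and Ws: "Ws \<in> carrier_mat m k" and G: "G \<in> carrier_mat D k"
  shows "obj W wc Ws G = (\<Sum>i<m. \<Sum>j<D. (W $$ (i,j) - wc $ i - (\<Sum>l<k. Ws $$ (i,l) * G $$ (j,l)))^2)"
  unfolding obj_def
  using W wc Ws G mat_mult_transpose_entry[OF Ws G]
  by (intro frob_sq_eq_sum) auto

lemma centred_svd_lower_bound:
  assumes W: "W \<in> carrier_mat m D" and D: "0 < D"
    and svd: "is_svd (W - outer ((1 / real D) \<cdot>\<^sub>v (W *\<^sub>v ones_vec D)) (ones_vec D)) U S V"
    and wc: "wc \<in> carrier_vec m" and Ws: "Ws \<in> carrier_mat m k" and G: "G \<in> carrier_mat D k"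
  shows "(\<Sum>q\<in>{k..<min m D}. (S $$ (q,q))^2) \<le> obj W wc Ws G"
proof -
  let ?A = "W - outer ((1 / real D) \<cdot>\<^sub>v (W *\<^sub>v ones_vec D)) (ones_vec D)"
  have A: "?A \<in> carrier_mat m D"
    using W by (intro minus_carrier_mat outer_carrier) auto
  have oU: "orthonormal_cols m {..<min m D} (\<lambda>i q. U $$ (i,q))"
    and oV: "orthonormal_cols D {..<min m D} (\<lambda>j q. V $$ (j,q))"
    using is_svd_orthonormal(1,2)[OF svd A] by (auto elim: orthonormal_cols_mono)
  have "(\<Sum>q\<in>{k..<min m D}. (S $$ (q,q))^2)
      \<le> (\<Sum>i<m. \<Sum>j<D. (W $$ (i,j) - wc $ i - (\<Sum>l<k. Ws $$ (i,l) * G $$ (j,l)))^2)"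
  proof (rule eckart_young_offset_lower_bound[OF oU oV is_svd_orthonormal(3)[OF svd A] _ D])
    show "\<And>q. q < min m D \<Longrightarrow> 0 \<le> S $$ (q,q)"
      and "\<And>i j. i \<le> j \<Longrightarrow> j < min m D \<Longrightarrow> S $$ (j,j) \<le> S $$ (i,i)"
      using svd W by (auto simp: is_svd_def)
    show "W $$ (i,j) - (\<Sum>j'<D. W $$ (i,j')) / real D
        = (\<Sum>q<min m D. S $$ (q,q) * U $$ (i,q) * V $$ (j,q))" if "i < m" "j < D" for i j
      using is_svd_entry[OF svd A that] W that row_mean_entry[OF W] by simp
  qed simp
  then show ?thesis using obj_eq_sum[OF W wc Ws G] by simp
qed

lemma offset_truncation:
  assumes W: "W \<in> carrier_mat m D" and wc: "wc \<in> carrier_vec m"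
    and svd: "is_svd (W - outer wc (ones_vec D)) U S V" and km: "k \<le> m" and kD: "k \<le> D"
  defines "M \<equiv> outer wc (ones_vec D) + first_cols k U * lead_block k S * transpose_mat (first_cols k V)"
  shows "M \<in> carrier_mat m D"
    and "\<And>i j. i < m \<Longrightarrow> j < D \<Longrightarrow> M $$ (i,j) = wc $ i + (\<Sum>q<k. S $$ (q,q) * U $$ (i,q) * V $$ (j,q))"
    and "frob_sq (W - M) = (\<Sum>q\<in>{k..<min m D}. (S $$ (q,q))^2)"
    and "orthonormal_cols m {..<k} (\<lambda>i q. U $$ (i,q))"
proof -
  have A: "W - outer wc (ones_vec D) \<in> carrier_mat m D"
    using W wc by (intro minus_carrier_mat outer_carrier) auto
  note L = is_svd_truncation[OF svd A km kD]
  show M: "M \<in> carrier_mat m D" using L wc by (simp add: M_def)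
  show "M $$ (i,j) = wc $ i + (\<Sum>q<k. S $$ (q,q) * U $$ (i,q) * V $$ (j,q))" if "i < m" "j < D" for i j
    using carrier_matD[OF L(1)] L(2) wc that by (simp add: M_def)
  have "W - M = (W - outer wc (ones_vec D)) - first_cols k U * lead_block k S * transpose_mat (first_cols k V)"
    using W wc carrier_matD[OF L(1)] by (intro eq_matI) (auto simp: M_def)
  then show "frob_sq (W - M) = (\<Sum>q\<in>{k..<min m D}. (S $$ (q,q))^2)"
    using truncated_svd_error[OF svd A km kD] by simp
  show "orthonormal_cols m {..<k} (\<lambda>i q. U $$ (i,q))"
    using is_svd_orthonormal(1)[OF svd A] km by (auto elim: orthonormal_cols_mono)
qed

section \<open>Rank and the Moore--Penrose pseudoinverse\<close>

lemma rank_le_card_of_sum: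
  fixes f g :: "nat \<Rightarrow> nat \<Rightarrow> real"
  assumes "finite K" and "A \<in> carrier_mat m D"
    and "\<And>i j. i < m \<Longrightarrow> j < D \<Longrightarrow> A $$ (i,j) = (\<Sum>q\<in>K. f q i * g q j)"
  shows "vec_space.rank m A \<le> card K"
  using assms
proof (induction K arbitrary: A rule: finite_induct)
  case empty
  then have "A = 0\<^sub>m m D" by (intro eq_matI) auto
  then show ?case using vec_space.rank_0I by simp
next
  case (insert x F)
  define B where "B = mat m D (\<lambda>(i,j). \<Sum>q\<in>F. f q i * g q j)"
  define C where "C = mat m D (\<lambda>(i,j). f x i * g x j)"
  have B: "B \<in> carrier_mat m D" and C: "C \<in> carrier_mat m D" by (auto simp: B_def C_def)
  have "A = B + C" using insert by (intro eq_matI) (auto simp: B_def C_def)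
  moreover have "vec_space.rank m B \<le> card F" using insert(3)[OF B] by (auto simp: B_def)
  moreover have "vec_space.rank m C \<le> 1"
    by (rule vec_space.rank_le_1_product_entries[OF C]) (auto simp: C_def)
  ultimately show ?case
    using vec_space.rank_subadditive[OF B C] insert by simp
qed

text \<open>A linear relation among the right factors lets one term be absorbed into the others.\<close>

lemma rank_le_card_of_sum_dependent:
  fixes f g :: "nat \<Rightarrow> nat \<Rightarrow> real" and x :: "nat \<Rightarrow> real"
  assumes fin: "finite K" and A: "A \<in> carrier_mat m D"
    and A_eq: "\<And>i j. i < m \<Longrightarrow> j < D \<Longrightarrow> A $$ (i,j) = (\<Sum>q\<in>K. f q i * g q j)"
    and dep: "\<And>j. j < D \<Longrightarrow> (\<Sum>q\<in>K. x q * g q j) = 0"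
    and p: "p \<in> K" "x p \<noteq> 0"
  shows "vec_space.rank m A \<le> card K - 1"
proof -
  have gp: "g p j = - (\<Sum>q\<in>K-{p}. x q * g q j) / x p" if "j < D" for j
  proof -
    have "x p * g p j + (\<Sum>q\<in>K-{p}. x q * g q j) = 0"
      using dep[OF that] sum.remove[OF fin p(1), of "\<lambda>q. x q * g q j"] by simp
    then show ?thesis using p(2) by (simp add: field_simps)
  qed
  have "vec_space.rank m A \<le> card (K - {p})"
  proof (rule rank_le_card_of_sum[OF _ A, of _ "\<lambda>q i. f q i - x q / x p * f p i" g])
    show "finite (K - {p})" using fin by simp
    fix i j assume i: "i < m" and j: "j < D"
    have "(\<Sum>q\<in>K-{p}. (f q i - x q / x p * f p i) * g q j)
        = (\<Sum>q\<in>K-{p}. f q i * g q j) - f p i / x p * (\<Sum>q\<in>K-{p}. x q * g q j)"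
      by (simp add: algebra_simps sum_subtractf sum_distrib_left)
    also have "\<dots> = f p i * g p j + (\<Sum>q\<in>K-{p}. f q i * g q j)"
      unfolding gp[OF j] by simp
    also have "\<dots> = A $$ (i,j)"
      using A_eq[OF i j] sum.remove[OF fin p(1), of "\<lambda>q. f q i * g q j"] by simp
    finally show "A $$ (i,j) = (\<Sum>q\<in>K-{p}. (f q i - x q / x p * f p i) * g q j)" by simp
  qed
  then show ?thesis using fin p by simp
qed

lemma nonzero_vec_component:
  assumes "x \<in> carrier_vec n" "x \<noteq> 0\<^sub>v n"
  obtains p where "p < n" "x $ p \<noteq> 0"
  using assms by (metis carrier_vecD eq_vecI index_zero_vec(1,2))

lemma rank_factorisation_injective:
  fixes Q R :: "real mat"
  assumes Q: "Q \<in> carrier_mat m r" and R: "R \<in> carrier_mat D r"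
    and rk: "vec_space.rank m (Q * transpose_mat R) = r"
    and x: "x \<in> carrier_vec r" and Rx: "R *\<^sub>v x = 0\<^sub>v D"
  shows "x = 0\<^sub>v r"
proof (rule ccontr)
  assume "x \<noteq> 0\<^sub>v r"
  then obtain p where p: "p < r" "x $ p \<noteq> 0" using nonzero_vec_component x by blast
  have "vec_space.rank m (Q * transpose_mat R) \<le> card {..<r} - 1"
  proof (rule rank_le_card_of_sum_dependent[where f="\<lambda>p i. Q $$ (i,p)" and g="\<lambda>p j. R $$ (j,p)"
        and x="\<lambda>p. x $ p" and p=p])
    show "(\<Sum>q\<in>{..<r}. x $ q * R $$ (j,q)) = 0" if "j < D" for j
      using Rx that mat_mult_vec_entry[OF R x that] by (simp add: mult_ac)
  qed (use Q R p mat_mult_transpose_entry[OF Q R] in auto)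
  then show False using rk p by simp
qed

lemma rank_succ_right_factor_injective:
  fixes M Ws G :: "real mat" and w y :: "real vec"
  assumes M: "M \<in> carrier_mat m D" and rk: "vec_space.rank m M = k + 1"
    and M_eq: "\<And>i j. i < m \<Longrightarrow> j < D \<Longrightarrow> M $$ (i,j) = (\<Sum>l<k. Ws $$ (i,l) * G $$ (j,l)) + w $ i"
    and y: "y \<in> carrier_vec k" and Gy: "\<And>j. j < D \<Longrightarrow> (\<Sum>l<k. y $ l * G $$ (j,l)) = 0"
  shows "y = 0\<^sub>v k"
proof (rule ccontr)
  assume "y \<noteq> 0\<^sub>v k"
  then obtain p where p: "p < k" "y $ p \<noteq> 0" using nonzero_vec_component y by blast
  have "vec_space.rank m M \<le> card {..<Suc k} - 1"
  proof (rule rank_le_card_of_sum_dependent[OF _ M,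
        where f="\<lambda>q i. if q < k then Ws $$ (i,q) else w $ i"
          and g="\<lambda>q j. if q < k then G $$ (j,q) else 1"
          and x="\<lambda>q. if q < k then y $ q else 0" and p=p])
    show "M $$ (i,j) = (\<Sum>q\<in>{..<Suc k}.
            (if q < k then Ws $$ (i,q) else w $ i) * (if q < k then G $$ (j,q) else 1))"
      if "i < m" "j < D" for i j
      using M_eq[OF that] by (simp add: lessThan_Suc)
    show "(\<Sum>q\<in>{..<Suc k}. (if q < k then y $ q else 0) * (if q < k then G $$ (j,q) else 1)) = 0"
      if "j < D" for j
      using Gy[OF that] by (simp add: lessThan_Suc)
  qed (use p in auto)
  then show False using rk by simp
qed

lemma is_pinv_absorb_left:
  fixes M X Y :: "real mat"
  assumes M: "M \<in> carrier_mat m D" and pX: "is_pinv M X" and pY: "is_pinv M Y"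
  shows "X = X * (M * Y)"
proof -
  have X: "X \<in> carrier_mat D m" and Y: "Y \<in> carrier_mat D m"
    using pX pY M unfolding is_pinv_def by auto
  have tM: "transpose_mat M \<in> carrier_mat D m" and tX: "transpose_mat X \<in> carrier_mat m D"
    using M X by auto
  have X2: "X * (M * X) = X" and Y1: "M * (Y * M) = M"
    using pX pY M X Y unfolding is_pinv_def
    by (auto simp: assoc_mult_mat[of _ m D _ m _ D] assoc_mult_mat[of _ D m _ D _ m])
  have sX: "transpose_mat X * transpose_mat M = M * X"
    and sY: "transpose_mat Y * transpose_mat M = M * Y"
    using pX pY M X Y unfolding is_pinv_def by (auto simp: transpose_mult[symmetric])
  have tMY: "transpose_mat M = transpose_mat M * (M * Y)"
  proof -
    have "transpose_mat M = transpose_mat (M * (Y * M))" using Y1 by simp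
    also have "\<dots> = transpose_mat M * (transpose_mat Y * transpose_mat M)"
      using M Y by (simp add: transpose_mult[of _ m D _ D] transpose_mult[of _ D m _ D])
    finally show ?thesis unfolding sY .
  qed
  have MX: "M * X \<in> carrier_mat m m" and MY: "M * Y \<in> carrier_mat m m" using M X Y by auto
  have "X = X * (transpose_mat X * transpose_mat M)" using X2 sX by simp
  also have "\<dots> = X * ((transpose_mat X * transpose_mat M) * (M * Y))"
    using assoc_mult_mat[OF tX tM MY] tMY by simp
  also have "\<dots> = (X * (M * X)) * (M * Y)" unfolding sX using assoc_mult_mat[OF X MX MY] by simp
  finally show ?thesis using X2 by simp
qed

lemma is_pinv_absorb_right:
  fixes M X Y :: "real mat"
  assumes M: "M \<in> carrier_mat m D" and pX: "is_pinv M X" and pY: "is_pinv M Y"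
  shows "Y = X * (M * Y)"
proof -
  have X: "X \<in> carrier_mat D m" and Y: "Y \<in> carrier_mat D m"
    using pX pY M unfolding is_pinv_def by auto
  have tM: "transpose_mat M \<in> carrier_mat D m" and tY: "transpose_mat Y \<in> carrier_mat m D"
    using M Y by auto
  have X1: "M * (X * M) = M" and Y2: "Y * (M * Y) = Y"
    using pX pY M X Y unfolding is_pinv_def
    by (auto simp: assoc_mult_mat[of _ m D _ m _ D] assoc_mult_mat[of _ D m _ D _ m])
  have sX: "transpose_mat M * transpose_mat X = X * M"
    and sY: "transpose_mat M * transpose_mat Y = Y * M"
    using pX pY M X Y unfolding is_pinv_def by (auto simp: transpose_mult[symmetric])
  have tMX: "transpose_mat M = (X * M) * transpose_mat M"
  proof -
    have "transpose_mat M = transpose_mat (M * (X * M))" using X1 by simp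
    also have "\<dots> = (transpose_mat M * transpose_mat X) * transpose_mat M"
      using M X by (simp add: transpose_mult[of _ m D _ D] transpose_mult[of _ D m _ D])
    finally show ?thesis unfolding sX .
  qed
  have XM: "X * M \<in> carrier_mat D D" using M X by auto
  have "Y = (transpose_mat M * transpose_mat Y) * Y"
    using Y2 assoc_mult_mat[OF Y M Y] sY by simp
  also have "\<dots> = (X * M) * ((transpose_mat M * transpose_mat Y) * Y)"
    using tMX assoc_mult_mat[OF XM tM tY] assoc_mult_mat[OF XM mult_carrier_mat[OF tM tY] Y]
      assoc_mult_mat[OF mult_carrier_mat[OF XM tM] tY Y] by simp
  also have "\<dots> = X * (M * Y)"
    unfolding sY using Y2 assoc_mult_mat[OF Y M Y] assoc_mult_mat[OF X M Y] by simp
  finally show ?thesis .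
qed

lemma is_pinv_unique:
  fixes M X Y :: "real mat"
  assumes "M \<in> carrier_mat m D" "is_pinv M X" "is_pinv M Y"
  shows "X = Y"
  using is_pinv_absorb_left[OF assms] is_pinv_absorb_right[OF assms] by simp

lemma symmetric_right_inverse_symmetric:
  fixes G Gi :: "real mat"
  assumes G: "G \<in> carrier_mat r r" and Gi: "Gi \<in> carrier_mat r r"
    and sym: "transpose_mat G = G" and GGi: "G * Gi = 1\<^sub>m r"
  shows "transpose_mat Gi = Gi"
proof -
  have left: "transpose_mat Gi * G = 1\<^sub>m r"
    using transpose_mult[OF G Gi] sym GGi by simp
  have "transpose_mat Gi = transpose_mat Gi * (G * Gi)" using GGi Gi by simp
  also have "\<dots> = (transpose_mat Gi * G) * Gi"
    using assoc_mult_mat[of "transpose_mat Gi" r r, OF _ G Gi] Gi by simp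
  finally show ?thesis using left Gi by simp
qed

lemma is_pinv_orthonormal_factorisation:
  fixes Q R Gi :: "real mat"
  assumes Q: "Q \<in> carrier_mat m r" and R: "R \<in> carrier_mat D r" and Gi: "Gi \<in> carrier_mat r r"
    and QQ: "transpose_mat Q * Q = 1\<^sub>m r" and GGi: "(transpose_mat R * R) * Gi = 1\<^sub>m r"
  shows "is_pinv (Q * transpose_mat R) (R * Gi * transpose_mat Q)"
proof -
  have tQ: "transpose_mat Q \<in> carrier_mat r m" and tR: "transpose_mat R \<in> carrier_mat r D"
    using Q R by auto
  have RGi: "R * Gi \<in> carrier_mat D r" using R Gi by auto
  have X: "R * Gi * transpose_mat Q \<in> carrier_mat D m" using R Gi Q by auto
  have M: "Q * transpose_mat R \<in> carrier_mat m D" using Q R by auto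
  have tGi: "transpose_mat Gi = Gi"
    using R by (intro symmetric_right_inverse_symmetric[OF _ Gi _ GGi]) (auto simp: transpose_mult)
  have k1: "transpose_mat R * ((R * Gi) * transpose_mat Q) = transpose_mat Q"
  proof -
    have "transpose_mat R * ((R * Gi) * transpose_mat Q) = (transpose_mat R * (R * Gi)) * transpose_mat Q"
      using assoc_mult_mat[OF tR RGi tQ] by simp
    also have "transpose_mat R * (R * Gi) = 1\<^sub>m r" using assoc_mult_mat[OF tR R Gi] GGi by simp
    finally show ?thesis using tQ by simp
  qed
  have k2: "transpose_mat Q * (Q * transpose_mat R) = transpose_mat R"
    using assoc_mult_mat[OF tQ Q tR] QQ tR by simp
  have MX: "(Q * transpose_mat R) * (R * Gi * transpose_mat Q) = Q * transpose_mat Q"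
    using assoc_mult_mat[OF Q tR X] k1 by simp
  have XM: "(R * Gi * transpose_mat Q) * (Q * transpose_mat R) = (R * Gi) * transpose_mat R"
    using assoc_mult_mat[OF RGi tQ M] k2 by simp
  show ?thesis unfolding is_pinv_def
  proof (intro conjI)
    show "R * Gi * transpose_mat Q
        \<in> carrier_mat (dim_col (Q * transpose_mat R)) (dim_row (Q * transpose_mat R))"
      using X Q R by simp
    show "Q * transpose_mat R * (R * Gi * transpose_mat Q) * (Q * transpose_mat R)
        = Q * transpose_mat R"
      unfolding MX using assoc_mult_mat[OF Q tQ M] k2 by simp
    show "R * Gi * transpose_mat Q * (Q * transpose_mat R) * (R * Gi * transpose_mat Q)
        = R * Gi * transpose_mat Q"
      unfolding XM using assoc_mult_mat[OF RGi tR X] k1 by simp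
    show "transpose_mat (Q * transpose_mat R * (R * Gi * transpose_mat Q))
        = Q * transpose_mat R * (R * Gi * transpose_mat Q)"
      unfolding MX using transpose_mult[OF Q tQ] by simp
    show "transpose_mat (R * Gi * transpose_mat Q * (Q * transpose_mat R))
        = R * Gi * transpose_mat Q * (Q * transpose_mat R)"
      unfolding XM using transpose_mult[OF RGi tR] transpose_mult[OF R Gi] tGi
        assoc_mult_mat[OF R Gi tR] by simp
  qed
qed

lemma gram_matrix_invertible:
  fixes R :: "real mat"
  assumes R: "R \<in> carrier_mat D r"
    and inj: "\<And>x. x \<in> carrier_vec r \<Longrightarrow> R *\<^sub>v x = 0\<^sub>v D \<Longrightarrow> x = 0\<^sub>v r"
  obtains Gi where "Gi \<in> carrier_mat r r" "(transpose_mat R * R) * Gi = 1\<^sub>m r"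
proof -
  have G: "transpose_mat R * R \<in> carrier_mat r r" using R by auto
  have "det (transpose_mat R * R) \<noteq> 0"
  proof
    assume "det (transpose_mat R * R) = 0"
    then obtain x where x: "x \<in> carrier_vec r" "x \<noteq> 0\<^sub>v r" "(transpose_mat R * R) *\<^sub>v x = 0\<^sub>v r"
      using det_0_iff_vec_prod_zero_field[OF G] by auto
    have Rx: "R *\<^sub>v x \<in> carrier_vec D" using R x by auto
    have "transpose_mat R *\<^sub>v (R *\<^sub>v x) = 0\<^sub>v r"
      using x R assoc_mult_mat_vec[of "transpose_mat R" r D R r x] by simp
    then have "(R *\<^sub>v x) \<bullet> (R *\<^sub>v x) = 0"
      using x transpose_vec_mult_scalar[OF R x(1) Rx] by simp
    then have "R *\<^sub>v x = 0\<^sub>v D" using Rx conjugate_square_eq_0_vec[OF Rx] by simp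
    then show False using inj x by auto
  qed
  then show ?thesis
    using that det_non_zero_imp_unit[OF G, of undefined] unfolding Units_def ring_mat_def by auto
qed

lemma pinv_of_orthonormal_factorisation:
  fixes Q R :: "real mat"
  assumes Q: "Q \<in> carrier_mat m r" and R: "R \<in> carrier_mat D r"
    and QQ: "transpose_mat Q * Q = 1\<^sub>m r" and rk: "vec_space.rank m (Q * transpose_mat R) = r"
  shows "is_pinv (Q * transpose_mat R) (pinv (Q * transpose_mat R))"
proof -
  obtain Gi where Gi: "Gi \<in> carrier_mat r r" "(transpose_mat R * R) * Gi = 1\<^sub>m r"
    using gram_matrix_invertible[OF R rank_factorisation_injective[OF Q R rk]] by blast
  have pX: "is_pinv (Q * transpose_mat R) (R * Gi * transpose_mat Q)"
    by (rule is_pinv_orthonormal_factorisation[OF Q R Gi(1) QQ Gi(2)])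
  have "pinv (Q * transpose_mat R) = R * Gi * transpose_mat Q"
    unfolding pinv_def
    using pX is_pinv_unique[of "Q * transpose_mat R" m D] Q R by (intro the_equality) auto
  then show ?thesis using pX by simp
qed

text \<open>Split the offset \<open>c\<close> into its projection onto the columns of \<open>U\<close> and a residual \<open>w\<close>;
  the rank hypothesis forces \<open>w \<noteq> 0\<close>, and \<open>w / |w|\<close> completes \<open>U\<close> to an orthonormal left factor.\<close>

lemma offset_low_rank_factorisation:
  fixes M :: "real mat" and c :: "real vec" and U V :: "nat \<Rightarrow> nat \<Rightarrow> real" and \<sigma> :: "nat \<Rightarrow> real"
  assumes M: "M \<in> carrier_mat m D" and rk: "vec_space.rank m M = k + 1"
    and oU: "orthonormal_cols m {..<k} U"
    and M_eq: "\<And>i j. i < m \<Longrightarrow> j < D \<Longrightarrow> M $$ (i,j) = c $ i + (\<Sum>q<k. \<sigma> q * U i q * V j q)"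
  obtains Q R \<nu> where "Q \<in> carrier_mat m (Suc k)" "R \<in> carrier_mat D (Suc k)"
    "transpose_mat Q * Q = 1\<^sub>m (Suc k)" "M = Q * transpose_mat R"
    "0 < \<nu>" "\<And>j. j < D \<Longrightarrow> R $$ (j,k) = \<nu>"
proof -
  define \<alpha> where "\<alpha> p = (\<Sum>i<m. U i p * c $ i)" for p
  define w where "w i = c $ i - (\<Sum>p<k. U i p * \<alpha> p)" for i
  define n where "n = sqrt (\<Sum>i<m. (w i)^2)"
  have wU: "(\<Sum>i<m. U i q * w i) = 0" if "q < k" for q
    using projection_residual_orthogonal[OF oU that, of "\<lambda>i. c $ i"] by (simp add: w_def \<alpha>_def)
  have M_eq': "M $$ (i,j) = (\<Sum>p<k. U i p * (\<alpha> p + \<sigma> p * V j p)) + w i" if "i < m" "j < D" for i j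
    unfolding M_eq[OF that] w_def by (simp add: sum.distrib algebra_simps)
  have "(\<Sum>i<m. (w i)^2) \<noteq> 0"
  proof
    assume "(\<Sum>i<m. (w i)^2) = 0"
    then have "w i = 0" if "i < m" for i
      using that sum_nonneg_eq_0_iff[of "{..<m}" "\<lambda>i. (w i)^2"] by simp
    then have "vec_space.rank m M \<le> card {..<k}"
      by (intro rank_le_card_of_sum[OF _ M, of _ "\<lambda>q i. U i q" "\<lambda>p j. \<alpha> p + \<sigma> p * V j p"])
        (auto simp: M_eq')
    then show False using rk by simp
  qed
  then have w_pos: "0 < (\<Sum>i<m. (w i)^2)" by (simp add: less_le sum_nonneg)
  then have n: "0 < n" by (simp add: n_def)
  define Q where "Q = mat m (Suc k) (\<lambda>(i,p). if p = k then w i / n else U i p)"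
  define R where "R = mat D (Suc k) (\<lambda>(j,p). if p = k then n else \<alpha> p + \<sigma> p * V j p)"
  have Q: "Q \<in> carrier_mat m (Suc k)" and R: "R \<in> carrier_mat D (Suc k)"
    by (auto simp: Q_def R_def)
  have "orthonormal_cols m {..<Suc k} (\<lambda>i p. if p = k then w i / n else U i p)"
  proof (rule orthonormal_cols_extend[OF oU])
    show "(\<Sum>i<m. U i p * (w i / n)) = 0" if "p < k" for p
      using wU[OF that] by (simp add: sum_divide_distrib[symmetric])
    show "(\<Sum>i<m. (w i / n)^2) = 1"
      unfolding n_def by (rule sum_sq_normalised[OF w_pos])
  qed
  then have QQ: "transpose_mat Q * Q = 1\<^sub>m (Suc k)"
    using Q by (subst orthonormal_cols_iff[OF Q], subst orthonormal_cols_cong) (auto simp: Q_def)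
  have QR: "M = Q * transpose_mat R"
  proof (rule eq_matI)
    fix i j assume "i < dim_row (Q * transpose_mat R)" "j < dim_col (Q * transpose_mat R)"
    then have ij: "i < m" "j < D" using Q R by auto
    show "M $$ (i,j) = (Q * transpose_mat R) $$ (i,j)"
      using M_eq'[OF ij] n ij mat_mult_transpose_entry[OF Q R ij]
      by (simp add: lessThan_Suc Q_def R_def)
  qed (use M Q R in auto)
  show ?thesis by (rule that[OF Q R QQ QR n]) (simp add: R_def)
qed

lemma ones_in_row_space_of_factorisation:
  fixes Q R :: "real mat"
  assumes Q: "Q \<in> carrier_mat m r" and R: "R \<in> carrier_mat D r"
    and QQ: "transpose_mat Q * Q = 1\<^sub>m r" and p: "p < r" and \<nu>: "\<nu> \<noteq> 0"
    and R_col: "\<And>j. j < D \<Longrightarrow> R $$ (j,p) = \<nu>"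
  shows "transpose_mat (Q * transpose_mat R) *\<^sub>v ((1 / \<nu>) \<cdot>\<^sub>v col Q p) = ones_vec D"
proof (rule eq_vecI)
  fix j assume "j < dim_vec (ones_vec D)"
  then have j: "j < D" by simp
  have oQ: "orthonormal_cols m {..<r} (\<lambda>i l. Q $$ (i,l))"
    using QQ orthonormal_cols_iff[OF Q] by simp
  have QR: "transpose_mat (Q * transpose_mat R) \<in> carrier_mat D m" using Q R by simp
  have "(transpose_mat (Q * transpose_mat R) *\<^sub>v ((1 / \<nu>) \<cdot>\<^sub>v col Q p)) $ j
      = (\<Sum>i<m. (Q * transpose_mat R) $$ (i,j) * ((1 / \<nu>) * Q $$ (i,p)))"
    using Q R j p by (subst mat_mult_vec_entry[OF QR _ j]) (auto intro!: sum.cong)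
  also have "\<dots> = (\<Sum>i<m. (\<Sum>l<r. Q $$ (i,l) * R $$ (j,l)) * Q $$ (i,p)) / \<nu>"
    using j mat_mult_transpose_entry[OF Q R] by (simp add: sum_divide_distrib)
  also have "\<dots> = (\<Sum>l<r. R $$ (j,l) * (\<Sum>i<m. Q $$ (i,l) * Q $$ (i,p))) / \<nu>"
    by (simp add: sum_distrib_left sum_distrib_right sum.swap[of _ "{..<m}"] mult_ac)
  also have "\<dots> = (\<Sum>l<r. if l = p then R $$ (j,p) else 0) / \<nu>"
    using oQ p unfolding orthonormal_cols_def by (intro arg_cong[where f="\<lambda>x. x / \<nu>"] sum.cong) auto
  also have "\<dots> = R $$ (j,p) / \<nu>" using p by simp
  finally show "(transpose_mat (Q * transpose_mat R) *\<^sub>v ((1 / \<nu>) \<cdot>\<^sub>v col Q p)) $ j = ones_vec D $ j"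
    using R_col[OF j] \<nu> j by simp
qed (use R in simp)

lemma pinv_transpose_solves:
  fixes M X :: "real mat"
  assumes M: "M \<in> carrier_mat m D" and pX: "is_pinv M X"
    and z: "z \<in> carrier_vec m" and Mz: "transpose_mat M *\<^sub>v z = b"
  shows "transpose_mat M *\<^sub>v (transpose_mat X *\<^sub>v b) = b"
proof -
  have X: "X \<in> carrier_mat D m" using pX M by (simp add: is_pinv_def)
  have tM: "transpose_mat M \<in> carrier_mat D m" and tX: "transpose_mat X \<in> carrier_mat m D"
    using M X by auto
  have "transpose_mat M * (transpose_mat X * transpose_mat M) = transpose_mat (M * X * M)"
    using transpose_mult[OF mult_carrier_mat[OF M X] M] transpose_mult[OF M X] by simp
  also have "\<dots> = transpose_mat M" using pX by (simp add: is_pinv_def)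
  finally have MXM: "transpose_mat M * (transpose_mat X * transpose_mat M) = transpose_mat M" .
  have "transpose_mat M *\<^sub>v (transpose_mat X *\<^sub>v b)
      = (transpose_mat M * (transpose_mat X * transpose_mat M)) *\<^sub>v z"
    unfolding Mz[symmetric]
    using assoc_mult_mat_vec[OF tX tM z] assoc_mult_mat_vec[OF tM mult_carrier_mat[OF tX tM] z]
    by simp
  then show ?thesis using MXM Mz by simp
qed

lemma offset_low_rank_pinv:
  fixes M :: "real mat" and c :: "real vec" and U V :: "nat \<Rightarrow> nat \<Rightarrow> real"
  assumes M: "M \<in> carrier_mat m D" and rk: "vec_space.rank m M = k + 1"
    and oU: "orthonormal_cols m {..<k} U"
    and M_eq: "\<And>i j. i < m \<Longrightarrow> j < D \<Longrightarrow> M $$ (i,j) = c $ i + (\<Sum>q<k. \<sigma> q * U i q * V j q)"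
  shows "is_pinv M (pinv M)"
    and "transpose_mat M *\<^sub>v (transpose_mat (pinv M) *\<^sub>v ones_vec D) = ones_vec D"
proof -
  obtain Q R \<nu> where Q: "Q \<in> carrier_mat m (Suc k)" and R: "R \<in> carrier_mat D (Suc k)"
    and QQ: "transpose_mat Q * Q = 1\<^sub>m (Suc k)" and QR: "M = Q * transpose_mat R"
    and \<nu>: "0 < \<nu>" and R_col: "\<And>j. j < D \<Longrightarrow> R $$ (j,k) = \<nu>"
    using offset_low_rank_factorisation[OF M rk oU M_eq] by blast
  show pinv: "is_pinv M (pinv M)"
    using pinv_of_orthonormal_factorisation[OF Q R QQ] rk by (simp add: QR)
  have ones: "transpose_mat M *\<^sub>v ((1 / \<nu>) \<cdot>\<^sub>v col Q k) = ones_vec D"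
    using ones_in_row_space_of_factorisation[OF Q R QQ _ _ R_col] \<nu> by (simp add: QR)
  show "transpose_mat M *\<^sub>v (transpose_mat (pinv M) *\<^sub>v ones_vec D) = ones_vec D"
    by (rule pinv_transpose_solves[OF M pinv _ ones]) (use Q in \<open>simp add: carrier_vecI\<close>)
qed

section \<open>The updated centre\<close>

lemma normalised_solution_inner:
  fixes M :: "real mat" and v :: "real vec"
  assumes M: "M \<in> carrier_mat m D" and v: "v \<in> carrier_vec m" and D: "0 < D"
    and Mv: "transpose_mat M *\<^sub>v v = ones_vec D"
  defines "w \<equiv> (1 / (v \<bullet> v)) \<cdot>\<^sub>v v"
  shows "transpose_mat M *\<^sub>v w = (w \<bullet> w) \<cdot>\<^sub>v ones_vec D"
proof -
  have "v \<noteq> 0\<^sub>v m"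
  proof
    assume "v = 0\<^sub>v m"
    moreover have "transpose_mat M *\<^sub>v 0\<^sub>v m = 0\<^sub>v D" using M by (intro eq_vecI) auto
    ultimately have "ones_vec D = 0\<^sub>v D" using Mv by simp
    then show False using D by (metis index_zero_vec(1) ones_vec_simps(2) zero_neq_one)
  qed
  then have "v \<bullet> v \<noteq> 0" using conjugate_square_eq_0_vec[OF v] by simp
  then have "w \<bullet> w = 1 / (v \<bullet> v)" using v by (simp add: w_def)
  moreover have "transpose_mat M *\<^sub>v w = (1 / (v \<bullet> v)) \<cdot>\<^sub>v ones_vec D"
    using M v Mv mult_mat_vec[of "transpose_mat M" D m v] by (simp add: w_def)
  ultimately show ?thesis by simp
qed

lemma orth_to_span_of_transpose_mult:
  fixes Ws :: "real mat" and w :: "real vec"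
  assumes Ws: "Ws \<in> carrier_mat m k" and w: "w \<in> carrier_vec m"
    and "transpose_mat Ws *\<^sub>v w = 0\<^sub>v k"
  shows "orth_to_span w Ws"
  unfolding orth_to_span_def col_span_def
proof (intro ballI)
  fix x assume "x \<in> {Ws *\<^sub>v z |z. z \<in> carrier_vec (dim_col Ws)}"
  then obtain z where x: "x = Ws *\<^sub>v z" and z: "z \<in> carrier_vec k" using Ws by auto
  have "w \<bullet> (Ws *\<^sub>v z) = (transpose_mat Ws *\<^sub>v w) \<bullet> z"
    using transpose_vec_mult_scalar[OF Ws z w] by simp
  then show "w \<bullet> x = 0" using x z assms(3) by simp
qed

text \<open>Here \<open>(W\<^sub>s G\<^sup>T)\<^sup>T w = M\<^sup>T w - |w|\<^sup>2 \<one> = 0\<close>, so \<open>W\<^sub>s\<^sup>T w\<close> lies in the kernel of \<open>G\<close>;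
  the rank hypothesis forces the columns of \<open>G\<close> to be independent.\<close>

lemma orth_to_span_of_rank_succ:
  fixes M Ws G :: "real mat" and w :: "real vec"
  assumes M: "M \<in> carrier_mat m D" and rk: "vec_space.rank m M = k + 1"
    and w: "w \<in> carrier_vec m" and Mw: "transpose_mat M *\<^sub>v w = (w \<bullet> w) \<cdot>\<^sub>v ones_vec D"
    and Ws: "Ws \<in> carrier_mat m k" and G: "G \<in> carrier_mat D k"
    and split: "Ws * transpose_mat G = M - outer w (ones_vec D)"
  shows "orth_to_span w Ws"
proof -
  define y where "y = transpose_mat Ws *\<^sub>v w"
  have y: "y \<in> carrier_vec k" unfolding y_def by (intro carrier_vecI) (use Ws in simp)
  have y_l: "y $ l = (\<Sum>i<m. Ws $$ (i,l) * w $ i)" if "l < k" for l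
    using Ws w that mat_mult_vec_entry[of "transpose_mat Ws" k m w l] by (simp add: y_def)
  have WsG: "(\<Sum>l<k. Ws $$ (i,l) * G $$ (j,l)) = M $$ (i,j) - w $ i" if "i < m" "j < D" for i j
  proof -
    have "(Ws * transpose_mat G) $$ (i,j) = M $$ (i,j) - w $ i"
      unfolding split using M w that by simp
    then show ?thesis using mat_mult_transpose_entry[OF Ws G that] by simp
  qed
  have Mw_j: "(\<Sum>i<m. M $$ (i,j) * w $ i) = w \<bullet> w" if "j < D" for j
  proof -
    have "(transpose_mat M *\<^sub>v w) $ j = (\<Sum>i<m. M $$ (i,j) * w $ i)"
      using M w that by (subst mat_mult_vec_entry[of _ D m]) (auto intro!: sum.cong)
    then show ?thesis using Mw that by simp
  qed
  have Gy: "(\<Sum>l<k. y $ l * G $$ (j,l)) = 0" if j: "j < D" for j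
  proof -
    have "(\<Sum>l<k. y $ l * G $$ (j,l)) = (\<Sum>i<m. w $ i * (\<Sum>l<k. Ws $$ (i,l) * G $$ (j,l)))"
      by (simp add: y_l sum_distrib_left sum_distrib_right sum.swap[of _ "{..<k}"] mult_ac)
    also have "\<dots> = (\<Sum>i<m. M $$ (i,j) * w $ i) - (\<Sum>i<m. w $ i * w $ i)"
      using WsG j by (simp add: right_diff_distrib sum_subtractf mult.commute)
    also have "\<dots> = 0"
      using Mw_j[OF j] w by (simp add: scalar_prod_def atLeast0LessThan)
    finally show ?thesis .
  qed
  have "y = 0\<^sub>v k" using rank_succ_right_factor_injective[where Ws=Ws and w=w, OF M rk _ y Gy] WsG by simp
  then show ?thesis using orth_to_span_of_transpose_mult[OF Ws w] by (simp add: y_def)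
qed

theorem theorem1:
  fixes W :: "real mat" and m D k :: nat
    and U S V :: "real mat" and Ws_new G_new :: "real mat"
  assumes W_dim: "W \<in> carrier_mat m D"
    and kD: "k < D" and km: "k < m"
    and svd: "is_svd (W - outer ((1 / real D) \<cdot>\<^sub>v (W *\<^sub>v ones_vec D)) (ones_vec D)) U S V"
    and rankM: "mat_rank (outer ((1 / real D) \<cdot>\<^sub>v (W *\<^sub>v ones_vec D)) (ones_vec D)
                   + (first_cols k U * lead_block k S) * transpose_mat (first_cols k V)) = k + 1"
    and Ws_dim: "Ws_new \<in> carrier_mat m k" and G_dim: "G_new \<in> carrier_mat D k"
    and fact: "let wc = (1 / real D) \<cdot>\<^sub>v (W *\<^sub>v ones_vec D);
                   M = outer wc (ones_vec D) + (first_cols k U * lead_block k S) * transpose_mat (first_cols k V);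
                   v = transpose_mat (pinv M) *\<^sub>v ones_vec D;
                   wc_new = (1 / (v \<bullet> v)) \<cdot>\<^sub>v v
               in Ws_new * transpose_mat G_new = M - outer wc_new (ones_vec D)"
  shows "let wc = (1 / real D) \<cdot>\<^sub>v (W *\<^sub>v ones_vec D);
             M = outer wc (ones_vec D) + (first_cols k U * lead_block k S) * transpose_mat (first_cols k V);
             v = transpose_mat (pinv M) *\<^sub>v ones_vec D;
             wc_new = (1 / (v \<bullet> v)) \<cdot>\<^sub>v v
         in orth_to_span wc_new Ws_new \<and>
            obj W wc_new Ws_new G_new = frob_sq (W - M) \<and>
            (\<forall>wc' Ws' G'. wc' \<in> carrier_vec m \<longrightarrow> Ws' \<in> carrier_mat m k \<longrightarrow> G' \<in> carrier_mat D k \<longrightarrow>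
                orth_to_span wc' Ws' \<longrightarrow> frob_sq (W - M) \<le> obj W wc' Ws' G')"
proof -
  define wc where "wc = (1 / real D) \<cdot>\<^sub>v (W *\<^sub>v ones_vec D)"
  define M where "M = outer wc (ones_vec D)
                      + first_cols k U * lead_block k S * transpose_mat (first_cols k V)"
  define v where "v = transpose_mat (pinv M) *\<^sub>v ones_vec D"
  define wc_new where "wc_new = (1 / (v \<bullet> v)) \<cdot>\<^sub>v v"
  have split: "Ws_new * transpose_mat G_new = M - outer wc_new (ones_vec D)"
    using fact by (simp add: Let_def wc_def M_def v_def wc_new_def)
  have wc: "wc \<in> carrier_vec m" using W_dim by (simp add: wc_def)
  have svd_wc: "is_svd (W - outer wc (ones_vec D)) U S V" using svd by (simp add: wc_def)
  note M = offset_truncation[OF W_dim wc svd_wc less_imp_le[OF km] less_imp_le[OF kD], folded M_def]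
  have "mat_rank M = k + 1" using rankM by (simp add: M_def wc_def)
  then have rk: "vec_space.rank m M = k + 1" using M(1) by (simp add: mat_rank_def)
  have pinv: "is_pinv M (pinv M)" and Mv: "transpose_mat M *\<^sub>v v = ones_vec D"
    using offset_low_rank_pinv[OF M(1) rk M(4) M(2)] by (simp_all add: v_def)
  have v: "v \<in> carrier_vec m"
    using pinv M(1) unfolding v_def is_pinv_def by (intro carrier_vecI) auto
  have orth: "orth_to_span wc_new Ws_new"
    using orth_to_span_of_rank_succ[OF M(1) rk _ _ Ws_dim G_dim split]
      normalised_solution_inner[OF M(1) v _ Mv] v kD by (simp add: wc_new_def)
  have "obj W wc_new Ws_new G_new = frob_sq (W - M)"
    unfolding obj_def split using W_dim M(1) v
    by (intro arg_cong[where f=frob_sq] eq_matI) (auto simp: wc_new_def)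
  moreover have "frob_sq (W - M) \<le> obj W wc' Ws' G'"
    if "wc' \<in> carrier_vec m" "Ws' \<in> carrier_mat m k" "G' \<in> carrier_mat D k" for wc' Ws' G'
    using centred_svd_lower_bound[OF W_dim _ svd that] M(3) kD by simp
  ultimately show ?thesis
    using orth by (simp add: Let_def wc_def[symmetric] M_def[symmetric] v_def[symmetric]
        wc_new_def[symmetric])
qed

end
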